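(* Let $M\in\{2,3,\dots\}$, let $\mathcal{G}$ be the chain (vertex set $\mathbb{Z}$, $x\sim y$ iff $|x-y|=1$), and let $N=kM$ with $k\in\{2,3,\dots\}$. For $j\in\{1,\dots,M\}$ define $\mathfrak{m}_j:\mathbb{Z}\to\{0,\dots,M\}$ by $\mathfrak{m}_j(0)=j$, $\mathfrak{m}_j(x)=M$ for $x\in\{1,\dots,k-1\}$, $\mathfrak{m}_j(k)=M-j$, and $\mathfrak{m}_j(x)=0$ otherwise. Then the minimizers of $V_N$ over $\mathfrak{M}_N$ are, up to translations in $\mathbb{Z}$, exactly the configurations $\mathfrak{m}_1,\dots,\mathfrak{m}_M$, and $V_N(\mathfrak{m}_j)=M^2$ for every $j\in\{1,\dots,M\}$.
   Context: $\mathfrak{M}_N$ is the set of finitely supported functions $\mathfrak{m}:\mathbb{Z}\to\{0,1,\dots,M\}$ with $\sum_x\mathfrak{m}(x)=N$. The potential is $V_N(\mathfrak{m})=\sum_{x\in\mathbb{Z}}\big(\frac{M}{2}(\mathfrak{m}(x)+\mathfrak{m}(x+1))-\mathfrak{m}(x)\mathfrak{m}(x+1)\big)$. A translation of $\mathfrak{m}$ is $x\mapsto\mathfrak{m}(x-t)$ for some $t\in\mathbb{Z}$. *)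

theory Defs
  imports "HOL-Analysis.Analysis"
begin

definition configs :: "nat \<Rightarrow> nat \<Rightarrow> (int \<Rightarrow> nat) set" where
  "configs M N = {m. finite {x. m x \<noteq> 0} \<and> (\<forall>x. m x \<le> M) \<and> (\<Sum>x\<in>{x. m x \<noteq> 0}. m x) = N}"

text \<open>Potential V_N; the summand vanishes unless m x or m (x+1) is nonzero,
  so the infinite sum over Z is the finite sum over that set.\<close>
definition potential :: "nat \<Rightarrow> (int \<Rightarrow> nat) \<Rightarrow> real" where
  "potential M m = (\<Sum>x\<in>{x. m x \<noteq> 0 \<or> m (x+1) \<noteq> 0}.
      (real M / 2) * (real (m x) + real (m (x+1))) - real (m x) * real (m (x+1)))"

definition minimizers :: "nat \<Rightarrow> nat \<Rightarrow> (int \<Rightarrow> nat) set" where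
  "minimizers M N = {m \<in> configs M N. \<forall>m'\<in>configs M N. potential M m \<le> potential M m'}"

definition translate :: "int \<Rightarrow> (int \<Rightarrow> nat) \<Rightarrow> (int \<Rightarrow> nat)" where
  "translate t m = (\<lambda>x. m (x - t))"

definition mconf :: "nat \<Rightarrow> nat \<Rightarrow> nat \<Rightarrow> int \<Rightarrow> nat" where
  "mconf M k j x = (if x = 0 then j else if 1 \<le> x \<and> x \<le> int k - 1 then M
                    else if x = int k then M - j else 0)"

end

theory Submission
  imports Defs
begin

(* Let h be the maximal height of m and N its mass. The linear part of the potential sums to M N,
   so V_N(m) = M N - sum_x m(x) m(x+1). Each product is at most h min(m(x), m(x+1)), and
   sum_x min(m(x), m(x+1)) = N - TV/2, where the total variation TV is at least 2h because m rises
   from 0 to h and falls back to 0. Hence V_N(m) >= M N - h (N - h) >= M N - M (N - M) = M^2, since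
   t (N - t) increases for t <= N/2 and h <= M <= N/2. Equality forces h = M, a unimodal profile,
   and max(m(x), m(x+1)) = M whenever both heights are nonzero; so m equals M strictly inside its
   support, and the mass constraint leaves only the translates of the m_j. *)

lemma sum_int_telescope:
  fixes f :: "int \<Rightarrow> 'a::ab_group_add"
  assumes "a \<le> c"
  shows "(\<Sum>x\<in>{a..<c}. f (x + 1) - f x) = f c - f a"
  using assms
proof (induction c rule: int_ge_induct)
  case base
  then show ?case by simp
next
  case (step c)
  then have "{a..<c + 1} = insert c {a..<c}" by auto
  with step show ?case by simp
qed

lemma int_interval_chain:
  fixes f :: "int \<Rightarrow> 'a"
  assumes "reflp R" "transp R" "x \<le> y" "\<And>z. x \<le> z \<Longrightarrow> z < y \<Longrightarrow> R (f z) (f (z + 1))"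
  shows "R (f x) (f y)"
  using assms(3,4)
proof (induction y rule: int_ge_induct)
  case base
  show ?case using \<open>reflp R\<close> by (simp add: reflpD)
next
  case (step y)
  then have "R (f x) (f y)" "R (f y) (f (y + 1))" by simp_all
  with \<open>transp R\<close> show ?case by (rule transpD)
qed

lemma sum_shift_eq_if_zero_ends:
  fixes u :: "int \<Rightarrow> 'a::ab_group_add"
  assumes "u a = 0" "u (b + 1) = 0"
  shows "(\<Sum>x\<in>{a..b}. u (x + 1)) = (\<Sum>x\<in>{a..b}. u x)"
proof (cases "a \<le> b + 1")
  case True
  have "(\<Sum>x\<in>{a..b}. u (x + 1)) - (\<Sum>x\<in>{a..b}. u x) = (\<Sum>x\<in>{a..<b + 1}. u (x + 1) - u x)"
    by (simp add: sum_subtractf atLeastLessThanPlusOne_atLeastAtMost_int)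
  also have "\<dots> = 0"
    using sum_int_telescope[OF True, of u] assms by simp
  finally show ?thesis by simp
qed simp

lemma variation_eq_twice_peak_plus_excess:
  fixes u :: "int \<Rightarrow> real"
  assumes "u a = 0" "u (b + 1) = 0" "a \<le> p" "p \<le> b"
  shows "(\<Sum>x\<in>{a..b}. \<bar>u (x + 1) - u x\<bar>) = 2 * u p
    + (\<Sum>x\<in>{a..<p}. \<bar>u (x + 1) - u x\<bar> - (u (x + 1) - u x))
    + (\<Sum>x\<in>{p..b}. \<bar>u (x + 1) - u x\<bar> + (u (x + 1) - u x))"
proof -
  have split: "{a..b} = {a..<p} \<union> {p..<b + 1}" and "{p..b} = {p..<b + 1}"
    using assms by auto
  have "(\<Sum>x\<in>{a..<p}. u (x + 1) - u x) = u p" "(\<Sum>x\<in>{p..<b + 1}. u (x + 1) - u x) = - u p"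
    using sum_int_telescope[of a p u] sum_int_telescope[of p "b + 1" u] assms by simp_all
  then show ?thesis
    unfolding split \<open>{p..b} = {p..<b + 1}\<close>
    by (simp add: sum.union_disjoint sum_subtractf sum.distrib)
qed

lemma sum_min_adjacent_eq:
  fixes u :: "int \<Rightarrow> real"
  assumes "u a = 0" "u (b + 1) = 0"
  shows "(\<Sum>x\<in>{a..b}. min (u x) (u (x + 1)))
    = (\<Sum>x\<in>{a..b}. u x) - (\<Sum>x\<in>{a..b}. \<bar>u (x + 1) - u x\<bar>) / 2"
proof -
  have "(\<Sum>x\<in>{a..b}. min (u x) (u (x + 1)))
      = (\<Sum>x\<in>{a..b}. (u x + u (x + 1) - \<bar>u (x + 1) - u x\<bar>) / 2)"
    by (rule sum.cong) (simp_all add: min_def)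
  also have "\<dots> = ((\<Sum>x\<in>{a..b}. u x) + (\<Sum>x\<in>{a..b}. u (x + 1))
      - (\<Sum>x\<in>{a..b}. \<bar>u (x + 1) - u x\<bar>)) / 2"
    by (simp add: sum_divide_distrib[symmetric] sum.distrib sum_subtractf)
  finally show ?thesis
    using sum_shift_eq_if_zero_ends[OF assms] by simp
qed

(* The defect consists of the excess of the total variation over 2 u p on the rising side [a, p)
   and on the falling side [p, b], and of the slack in u x u (x + 1) <= u p min (u x) (u (x + 1)). *)
lemma sum_adjacent_products_defect:
  fixes u :: "int \<Rightarrow> real"
  assumes "u a = 0" "u (b + 1) = 0" "a \<le> p" "p \<le> b"
  shows "u p * ((\<Sum>x\<in>{a..b}. u x) - u p) - (\<Sum>x\<in>{a..b}. u x * u (x + 1))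
    = u p / 2 * ((\<Sum>x\<in>{a..<p}. \<bar>u (x + 1) - u x\<bar> - (u (x + 1) - u x))
                 + (\<Sum>x\<in>{p..b}. \<bar>u (x + 1) - u x\<bar> + (u (x + 1) - u x)))
      + (\<Sum>x\<in>{a..b}. min (u x) (u (x + 1)) * (u p - max (u x) (u (x + 1))))"
proof -
  have "min (u x) (u (x + 1)) * (u p - max (u x) (u (x + 1)))
      = u p * min (u x) (u (x + 1)) - u x * u (x + 1)" for x
    by (simp add: min_def max_def algebra_simps)
  then have "(\<Sum>x\<in>{a..b}. min (u x) (u (x + 1)) * (u p - max (u x) (u (x + 1))))
      = u p * (\<Sum>x\<in>{a..b}. min (u x) (u (x + 1))) - (\<Sum>x\<in>{a..b}. u x * u (x + 1))"
    by (simp add: sum_subtractf sum_distrib_left)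
  with sum_min_adjacent_eq[OF assms(1,2)] variation_eq_twice_peak_plus_excess[OF assms]
  show ?thesis
    by algebra
qed

lemma sum_adjacent_products_le:
  fixes u :: "int \<Rightarrow> real"
  assumes "u a = 0" "u (b + 1) = 0" "a \<le> p" "p \<le> b"
    and "\<And>x. 0 \<le> u x" "\<And>x. u x \<le> u p"
  shows "(\<Sum>x\<in>{a..b}. u x * u (x + 1)) \<le> u p * ((\<Sum>x\<in>{a..b}. u x) - u p)"
proof -
  define rise_excess where
    "rise_excess = (\<Sum>x\<in>{a..<p}. \<bar>u (x + 1) - u x\<bar> - (u (x + 1) - u x))"
  define fall_excess where
    "fall_excess = (\<Sum>x\<in>{p..b}. \<bar>u (x + 1) - u x\<bar> + (u (x + 1) - u x))"
  define gap where
    "gap = (\<Sum>x\<in>{a..b}. min (u x) (u (x + 1)) * (u p - max (u x) (u (x + 1))))"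
  have "rise_excess \<ge> 0" "fall_excess \<ge> 0" "gap \<ge> 0"
    unfolding rise_excess_def fall_excess_def gap_def
    using assms(5,6) by (auto intro!: sum_nonneg mult_nonneg_nonneg)
  then have "0 \<le> u p / 2 * (rise_excess + fall_excess) + gap"
    using assms(5)[of p] by simp
  then show ?thesis
    using sum_adjacent_products_defect[OF assms(1-4)]
    unfolding rise_excess_def fall_excess_def gap_def by linarith
qed

lemma sum_adjacent_products_eqD:
  fixes u :: "int \<Rightarrow> real"
  assumes "u a = 0" "u (b + 1) = 0" "a \<le> p" "p \<le> b"
    and nonneg: "\<And>x. 0 \<le> u x" and peak: "\<And>x. u x \<le> u p" and "0 < u p"
    and eq: "(\<Sum>x\<in>{a..b}. u x * u (x + 1)) = u p * ((\<Sum>x\<in>{a..b}. u x) - u p)"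
  shows "\<And>x. a \<le> x \<Longrightarrow> x < p \<Longrightarrow> u x \<le> u (x + 1)"
    and "\<And>x. p \<le> x \<Longrightarrow> x \<le> b \<Longrightarrow> u (x + 1) \<le> u x"
    and "\<And>x. a \<le> x \<Longrightarrow> x \<le> b \<Longrightarrow> 0 < u x \<Longrightarrow> 0 < u (x + 1)
           \<Longrightarrow> max (u x) (u (x + 1)) = u p"
proof -
  define rise_excess where
    "rise_excess = (\<Sum>x\<in>{a..<p}. \<bar>u (x + 1) - u x\<bar> - (u (x + 1) - u x))"
  define fall_excess where
    "fall_excess = (\<Sum>x\<in>{p..b}. \<bar>u (x + 1) - u x\<bar> + (u (x + 1) - u x))"
  define gap where
    "gap = (\<Sum>x\<in>{a..b}. min (u x) (u (x + 1)) * (u p - max (u x) (u (x + 1))))"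
  have "rise_excess \<ge> 0" "fall_excess \<ge> 0" "gap \<ge> 0"
    unfolding rise_excess_def fall_excess_def gap_def
    using nonneg peak by (auto intro!: sum_nonneg mult_nonneg_nonneg)
  moreover have "u p / 2 * (rise_excess + fall_excess) + gap = 0"
    using sum_adjacent_products_defect[OF assms(1-4)] eq
    unfolding rise_excess_def fall_excess_def gap_def by linarith
  moreover have "0 \<le> u p / 2 * (rise_excess + fall_excess)"
    using calculation(1,2) \<open>0 < u p\<close> by simp
  ultimately have "gap = 0" and "u p / 2 * (rise_excess + fall_excess) = 0"
    by linarith+
  with \<open>0 < u p\<close> \<open>rise_excess \<ge> 0\<close> \<open>fall_excess \<ge> 0\<close>
  have "rise_excess = 0" "fall_excess = 0"
    by simp_all
  show "u x \<le> u (x + 1)" if "a \<le> x" "x < p" for x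
  proof -
    have "\<bar>u (x + 1) - u x\<bar> - (u (x + 1) - u x) = 0"
      using \<open>rise_excess = 0\<close> that unfolding rise_excess_def
      by (subst (asm) sum_nonneg_eq_0_iff) auto
    then show ?thesis by linarith
  qed
  show "u (x + 1) \<le> u x" if "p \<le> x" "x \<le> b" for x
  proof -
    have "\<bar>u (x + 1) - u x\<bar> + (u (x + 1) - u x) = 0"
      using \<open>fall_excess = 0\<close> that unfolding fall_excess_def
      by (subst (asm) sum_nonneg_eq_0_iff) auto
    then show ?thesis by linarith
  qed
  show "max (u x) (u (x + 1)) = u p"
    if "a \<le> x" "x \<le> b" "0 < u x" "0 < u (x + 1)" for x
  proof -
    have "min (u x) (u (x + 1)) * (u p - max (u x) (u (x + 1))) = 0"
      using \<open>gap = 0\<close> that nonneg peak unfolding gap_def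
      by (subst (asm) sum_nonneg_eq_0_iff) (auto intro!: mult_nonneg_nonneg)
    moreover have "min (u x) (u (x + 1)) > 0" using that by simp
    ultimately show ?thesis by simp
  qed
qed

lemma mult_self_diff_strict_mono:
  fixes s t N :: real
  assumes "s < t" "2 * t \<le> N"
  shows "s * (N - s) < t * (N - t)"
proof -
  have "t * (N - t) - s * (N - s) = (t - s) * (N - t - s)"
    by (simp add: algebra_simps)
  also have "\<dots> > 0"
    using assms by (intro mult_pos_pos) auto
  finally show ?thesis by simp
qed

lemma configs_sum_on:
  assumes "m \<in> configs M N" "finite I" "\<And>x. m x \<noteq> 0 \<Longrightarrow> x \<in> I"
  shows "(\<Sum>x\<in>I. m x) = N"
proof -
  have "(\<Sum>x\<in>I. m x) = (\<Sum>x\<in>{x. m x \<noteq> 0}. m x)"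
    by (rule sum.mono_neutral_right) (use assms in auto)
  with assms(1) show ?thesis by (simp add: configs_def)
qed

lemma configs_obtain_window:
  assumes "m \<in> configs M N" "0 < N"
  obtains L R p where "L \<le> p" "p \<le> R" "m L \<noteq> 0" "m R \<noteq> 0"
    "\<And>x. m x \<noteq> 0 \<Longrightarrow> L \<le> x \<and> x \<le> R" "\<And>x. m x \<le> m p"
proof -
  define S where "S = {x. m x \<noteq> 0}"
  have "finite S" using assms(1) by (simp add: configs_def S_def)
  moreover have "sum m S = N"
    using assms(1) by (simp add: configs_def S_def)
  with assms(2) have "S \<noteq> {}" by auto
  ultimately have "Max (m ` S) \<in> m ` S" "Min S \<in> S" "Max S \<in> S" by simp_all
  then obtain p where "p \<in> S" "m p = Max (m ` S)" by auto
  have "m x \<le> m p" for x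
    using \<open>finite S\<close> \<open>m p = Max (m ` S)\<close> by (cases "x \<in> S") (simp_all add: S_def)
  moreover have "Min S \<le> x \<and> x \<le> Max S" if "m x \<noteq> 0" for x
    using \<open>finite S\<close> that by (simp add: S_def)
  ultimately show thesis
    using that \<open>p \<in> S\<close> \<open>Min S \<in> S\<close> \<open>Max S \<in> S\<close> unfolding S_def by blast
qed

lemma potential_eq_sum_on:
  assumes "\<And>x. m x \<noteq> 0 \<Longrightarrow> a < x \<and> x \<le> b"
  shows "potential M m = (\<Sum>x\<in>{a..b}.
      real M / 2 * (real (m x) + real (m (x + 1))) - real (m x) * real (m (x + 1)))"
  unfolding potential_def
  by (rule sum.mono_neutral_left) (use assms in fastforce)+

lemma potential_eq_mass_minus_products:
  assumes "m \<in> configs M N" "\<And>x. m x \<noteq> 0 \<Longrightarrow> a < x \<and> x \<le> b"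
  shows "potential M m = real M * real N - (\<Sum>x\<in>{a..b}. real (m x) * real (m (x + 1)))"
proof -
  have "(\<Sum>x\<in>{a..b}. m x) = N"
    by (rule configs_sum_on[OF assms(1)]) (use assms(2) in fastforce)+
  then have mass: "(\<Sum>x\<in>{a..b}. real (m x)) = real N"
    by (metis of_nat_sum)
  have shift: "(\<Sum>x\<in>{a..b}. real (m (x + 1))) = (\<Sum>x\<in>{a..b}. real (m x))"
    by (rule sum_shift_eq_if_zero_ends) (use assms(2) in fastforce)+
  have "potential M m = (\<Sum>x\<in>{a..b}.
      real M / 2 * (real (m x) + real (m (x + 1))) - real (m x) * real (m (x + 1)))"
    using assms(2) by (rule potential_eq_sum_on)
  also have "\<dots> = real M / 2 * ((\<Sum>x\<in>{a..b}. real (m x)) + (\<Sum>x\<in>{a..b}. real (m (x + 1))))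
      - (\<Sum>x\<in>{a..b}. real (m x) * real (m (x + 1)))"
    by (simp add: sum_subtractf sum.distrib flip: sum_distrib_left sum_divide_distrib)
  finally show ?thesis
    using mass shift by simp
qed

lemma translate_in_configs:
  assumes "m \<in> configs M N"
  shows "translate t m \<in> configs M N"
proof -
  have supp: "{x. translate t m x \<noteq> 0} = (\<lambda>x. x + t) ` {x. m x \<noteq> 0}"
    by (force simp: translate_def image_iff)
  have "(\<Sum>x\<in>{x. translate t m x \<noteq> 0}. translate t m x) = (\<Sum>x\<in>{x. m x \<noteq> 0}. m x)"
    unfolding supp by (subst sum.reindex) (auto simp: translate_def)
  moreover have "finite {x. translate t m x \<noteq> 0}"
    unfolding supp using assms by (simp add: configs_def)
  ultimately show ?thesis
    using assms unfolding configs_def by (simp add: translate_def)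
qed

lemma potential_translate: "potential M (translate t m) = potential M m"
  unfolding potential_def translate_def
  by (rule sum.reindex_bij_witness[of _ "\<lambda>x. x + t" "\<lambda>x. x - t"]) (auto simp: algebra_simps)

lemma mconf_in_configs:
  assumes "j \<le> M" "1 \<le> k"
  shows "mconf M k j \<in> configs M (k * M)"
proof -
  have supp: "mconf M k j x \<noteq> 0 \<Longrightarrow> x \<in> {0..int k}" for x
    by (auto simp: mconf_def split: if_splits)
  have "{0..int k} = insert 0 (insert (int k) {1..int (k - 1)})"
    using assms by auto
  then have "(\<Sum>x\<in>{0..int k}. mconf M k j x)
      = mconf M k j 0 + mconf M k j (int k) + (\<Sum>x\<in>{1..int (k - 1)}. mconf M k j x)"
    using assms by simp
  also have "(\<Sum>x\<in>{1..int (k - 1)}. mconf M k j x) = (\<Sum>x\<in>{1..int (k - 1)}. M)"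
    by (intro sum.cong) (auto simp: mconf_def)
  also have "mconf M k j 0 + mconf M k j (int k) + (\<Sum>x\<in>{1..int (k - 1)}. M) = j + (M - j) + (k - 1) * M"
    using assms by (simp add: mconf_def) arith
  also have "\<dots> = k * M"
    using assms by (cases k) auto
  finally have mass: "(\<Sum>x\<in>{0..int k}. mconf M k j x) = k * M" .
  have "(\<Sum>x\<in>{x. mconf M k j x \<noteq> 0}. mconf M k j x) = (\<Sum>x\<in>{0..int k}. mconf M k j x)"
    by (rule sum.mono_neutral_left) (use supp in auto)
  moreover have "finite {x. mconf M k j x \<noteq> 0}"
    by (rule finite_subset[of _ "{0..int k}"]) (use supp in auto)
  ultimately show ?thesis
    using assms mass by (simp add: configs_def mconf_def)
qed

lemma potential_mconf:
  assumes "j \<le> M" "2 \<le> k"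
  shows "potential M (mconf M k j) = real M ^ 2"
proof -
  let ?m = "mconf M k j"
  let ?term = "\<lambda>x. real M / 2 * (real (?m x) + real (?m (x + 1))) - real (?m x) * real (?m (x + 1))"
  have "potential M ?m = (\<Sum>x\<in>{-1..int k}. ?term x)"
    by (rule potential_eq_sum_on) (auto simp: mconf_def split: if_splits)
  also have "\<dots> = (\<Sum>x\<in>{-1, 0, int k - 1, int k}. ?term x)"
  proof (rule sum.mono_neutral_right)
    show "\<forall>x\<in>{-1..int k} - {-1, 0, int k - 1, int k}. ?term x = 0"
      by (auto simp: mconf_def)
  qed (use assms in auto)
  also have "\<dots> = ?term (-1) + ?term 0 + ?term (int k - 1) + ?term (int k)"
    using assms by simp
  also have "\<dots> = real M ^ 2"
    using assms by (simp add: mconf_def of_nat_diff power2_eq_square algebra_simps)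
  finally show ?thesis .
qed

lemma plateau_if_unimodal_saturated:
  fixes m :: "int \<Rightarrow> nat"
  assumes "m L \<noteq> 0" "m R \<noteq> 0" "L < x" "x < R"
    and up: "\<And>z. L \<le> z \<Longrightarrow> z < p \<Longrightarrow> m z \<le> m (z + 1)"
    and down: "\<And>z. p \<le> z \<Longrightarrow> z < R \<Longrightarrow> m (z + 1) \<le> m z"
    and saturated: "\<And>z. L \<le> z \<Longrightarrow> z < R \<Longrightarrow> m z \<noteq> 0 \<Longrightarrow> m (z + 1) \<noteq> 0
      \<Longrightarrow> max (m z) (m (z + 1)) = M"
  shows "m x = M"
proof (cases "x \<le> p")
  case True
  have "m L \<le> m (x - 1)"
    by (rule int_interval_chain[where R = "(\<le>)"]) (use up True \<open>L < x\<close> in auto)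
  moreover have "m (x - 1) \<le> m x"
    using up[of "x - 1"] True \<open>L < x\<close> by simp
  ultimately show ?thesis
    using saturated[of "x - 1"] \<open>m L \<noteq> 0\<close> \<open>L < x\<close> \<open>x < R\<close> by (simp add: max_def)
next
  case False
  have "m R \<le> m (x + 1)"
    by (rule int_interval_chain[where R = "(\<ge>)"]) (use down False \<open>x < R\<close> in auto)
  moreover have "m (x + 1) \<le> m x"
    using down[of x] False \<open>x < R\<close> by simp
  ultimately show ?thesis
    using saturated[of x] \<open>m R \<noteq> 0\<close> \<open>L < x\<close> \<open>x < R\<close> by (simp add: max_def)
qed

lemma mult_eq_add_bounded_cases:
  fixes q M j c :: nat
  assumes "q * M = j + c" "1 \<le> j" "j \<le> M" "1 \<le> c" "c \<le> M"
  shows "q = 1 \<and> c = M - j \<or> q = 2 \<and> j = M \<and> c = M"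
proof -
  have "q \<noteq> 0"
    using assms(1,2) by (cases "q = 0") auto
  moreover have "\<not> 3 \<le> q"
  proof
    assume "3 \<le> q"
    then have "3 * M \<le> j + c"
      unfolding assms(1)[symmetric] by (rule mult_le_mono1)
    with assms(2-5) show False by linarith
  qed
  ultimately have "q = 1 \<or> q = 2"
    by linarith
  with assms show ?thesis
    by auto
qed

lemma plateau_width:
  assumes m: "m \<in> configs M (k * M)" and "2 \<le> k"
    and supp: "\<And>x. m x \<noteq> 0 \<Longrightarrow> L \<le> x \<and> x \<le> R" and "m L \<noteq> 0" "m R \<noteq> 0"
    and plateau: "\<And>x. L < x \<Longrightarrow> x < R \<Longrightarrow> m x = M"
  shows "R - L = int k \<and> m R = M - m L \<or> R - L = int k - 1 \<and> m L = M \<and> m R = M"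
proof -
  have bounds: "1 \<le> m L" "m L \<le> M" "1 \<le> m R" "m R \<le> M"
    using m \<open>m L \<noteq> 0\<close> \<open>m R \<noteq> 0\<close> by (auto simp: configs_def)
  have "L < R"
  proof (rule ccontr)
    assume "\<not> L < R"
    with supp[of L] \<open>m L \<noteq> 0\<close> have "m x \<noteq> 0 \<Longrightarrow> x \<in> {L}" for x
      using supp[of x] by simp
    then have "k * M = m L"
      using configs_sum_on[OF m, of "{L}"] by simp
    moreover have "2 * M \<le> k * M"
      using \<open>2 \<le> k\<close> by (rule mult_le_mono1)
    ultimately show False
      using bounds by linarith
  qed
  define n where "n = nat (R - L - 1)"
  have "k * M = (\<Sum>x\<in>{L..R}. m x)"
    by (rule configs_sum_on[OF m, symmetric]) (use supp in auto)
  also have "{L..R} = insert L (insert R {L<..<R})"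
    using \<open>L < R\<close> by auto
  also have "(\<Sum>x\<in>insert L (insert R {L<..<R}). m x) = m L + m R + n * M"
    using \<open>L < R\<close> plateau by (simp add: n_def) arith
  finally have "(k - n) * M = m L + m R"
    by (simp add: diff_mult_distrib)
  from mult_eq_add_bounded_cases[OF this bounds] \<open>L < R\<close> show ?thesis
    by (auto simp: n_def)
qed

lemma plateau_eq_translate_mconf:
  assumes "2 \<le> k"
    and supp: "\<And>x. m x \<noteq> 0 \<Longrightarrow> L \<le> x \<and> x \<le> R"
    and plateau: "\<And>x. L < x \<Longrightarrow> x < R \<Longrightarrow> m x = M"
    and width: "R - L = int k \<and> m R = M - m L \<or> R - L = int k - 1 \<and> m L = M \<and> m R = M"
  shows "m = translate L (mconf M k (m L))"
proof
  fix x
  have outside: "m x = 0" if "x < L \<or> R < x"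
    using supp[of x] that by (cases "m x = 0") auto
  consider "x < L" | "x = L" | "L < x" "x < R" | "x = R" | "R < x"
    by linarith
  then show "m x = translate L (mconf M k (m L)) x"
  proof cases
    case 1
    then show ?thesis by (simp add: outside translate_def mconf_def)
  next
    case 2
    then show ?thesis by (simp add: translate_def mconf_def)
  next
    case 3
    then show ?thesis using width by (auto simp: plateau translate_def mconf_def)
  next
    case 4
    then show ?thesis using width \<open>2 \<le> k\<close> by (auto simp: translate_def mconf_def)
  next
    case 5
    then show ?thesis using width \<open>2 \<le> k\<close> by (auto simp: outside translate_def mconf_def)
  qed
qed

lemma potential_ge_peak_bound:
  assumes m: "m \<in> configs M N" and "L \<le> p" "p \<le> R"
    and supp: "\<And>x. m x \<noteq> 0 \<Longrightarrow> L \<le> x \<and> x \<le> R" and peak: "\<And>x. m x \<le> m p"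
  shows "real M * real N - real (m p) * (real N - real (m p)) \<le> potential M m"
proof -
  define u where "u x = real (m x)" for x
  have supp': "\<And>x. m x \<noteq> 0 \<Longrightarrow> L - 1 < x \<and> x \<le> R"
    using supp by fastforce
  have "(\<Sum>x\<in>{L - 1..R}. m x) = N"
    by (rule configs_sum_on[OF m]) (use supp' in fastforce)+
  then have mass: "(\<Sum>x\<in>{L - 1..R}. u x) = real N"
    unfolding u_def by (metis of_nat_sum)
  have "(\<Sum>x\<in>{L - 1..R}. u x * u (x + 1)) \<le> u p * ((\<Sum>x\<in>{L - 1..R}. u x) - u p)"
    by (rule sum_adjacent_products_le)
      (use supp' \<open>L \<le> p\<close> \<open>p \<le> R\<close> peak in \<open>fastforce simp: u_def\<close>)+
  then show ?thesis
    using potential_eq_mass_minus_products[OF m supp'] unfolding mass by (simp add: u_def)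
qed

lemma potential_eq_peak_boundD:
  assumes m: "m \<in> configs M N" and "L \<le> p" "p \<le> R"
    and supp: "\<And>x. m x \<noteq> 0 \<Longrightarrow> L \<le> x \<and> x \<le> R" and peak: "\<And>x. m x \<le> m p" and "m p \<noteq> 0"
    and eq: "potential M m = real M * real N - real (m p) * (real N - real (m p))"
  shows "\<And>x. L \<le> x \<Longrightarrow> x < p \<Longrightarrow> m x \<le> m (x + 1)"
    and "\<And>x. p \<le> x \<Longrightarrow> x < R \<Longrightarrow> m (x + 1) \<le> m x"
    and "\<And>x. L \<le> x \<Longrightarrow> x < R \<Longrightarrow> m x \<noteq> 0 \<Longrightarrow> m (x + 1) \<noteq> 0
           \<Longrightarrow> max (m x) (m (x + 1)) = m p"
proof -
  define u where "u x = real (m x)" for x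
  have supp': "\<And>x. m x \<noteq> 0 \<Longrightarrow> L - 1 < x \<and> x \<le> R"
    using supp by fastforce
  have "(\<Sum>x\<in>{L - 1..R}. m x) = N"
    by (rule configs_sum_on[OF m]) (use supp' in fastforce)+
  then have mass: "(\<Sum>x\<in>{L - 1..R}. u x) = real N"
    unfolding u_def by (metis of_nat_sum)
  have u_facts: "u (L - 1) = 0" "u (R + 1) = 0" "L - 1 \<le> p" "p \<le> R"
    "\<And>x. 0 \<le> u x" "\<And>x. u x \<le> u p" "0 < u p"
    using supp' \<open>L \<le> p\<close> \<open>p \<le> R\<close> peak \<open>m p \<noteq> 0\<close> by (fastforce simp: u_def)+
  have "(\<Sum>x\<in>{L - 1..R}. u x * u (x + 1)) = u p * ((\<Sum>x\<in>{L - 1..R}. u x) - u p)"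
    using potential_eq_mass_minus_products[OF m supp'] eq unfolding mass by (simp add: u_def)
  note steps = sum_adjacent_products_eqD[OF u_facts this]
  show "m x \<le> m (x + 1)" if "L \<le> x" "x < p" for x
    using steps(1)[of x] that by (simp add: u_def)
  show "m (x + 1) \<le> m x" if "p \<le> x" "x < R" for x
    using steps(2)[of x] that by (simp add: u_def)
  show "max (m x) (m (x + 1)) = m p" if "L \<le> x" "x < R" "m x \<noteq> 0" "m (x + 1) \<noteq> 0" for x
    using steps(3)[of x] that by (simp add: u_def flip: of_nat_max)
qed

lemma potential_ge_sq:
  assumes m: "m \<in> configs M N" and "0 < M" "2 * M \<le> N"
  shows "real M ^ 2 \<le> potential M m"
proof -
  obtain L R p where "L \<le> p" "p \<le> R" "\<And>x. m x \<noteq> 0 \<Longrightarrow> L \<le> x \<and> x \<le> R" "\<And>x. m x \<le> m p"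
    using configs_obtain_window[OF m] assms(2,3) by (metis mult_pos_pos order_less_le_trans pos2)
  then have "real M * real N - real (m p) * (real N - real (m p)) \<le> potential M m"
    using m by (intro potential_ge_peak_bound)
  moreover have "real (m p) * (real N - real (m p)) \<le> real M * (real N - real M)"
  proof (cases "m p = M")
    case False
    moreover have "m p \<le> M"
      using m by (simp add: configs_def)
    ultimately have "real (m p) < real M"
      by simp
    with \<open>2 * M \<le> N\<close> show ?thesis
      using mult_self_diff_strict_mono[of "real (m p)" "real M" "real N"] by simp
  qed simp
  ultimately show ?thesis
    by (simp add: power2_eq_square algebra_simps)
qed

lemma potential_eq_sq_imp_translate_mconf:
  assumes m: "m \<in> configs M (k * M)" and "0 < M" "2 \<le> k"
    and V: "potential M m = real M ^ 2"
  shows "\<exists>t j. j \<in> {1..M} \<and> m = translate t (mconf M k j)"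
proof -
  obtain L R p where window: "L \<le> p" "p \<le> R" "m L \<noteq> 0" "m R \<noteq> 0"
    and supp: "\<And>x. m x \<noteq> 0 \<Longrightarrow> L \<le> x \<and> x \<le> R" and peak: "\<And>x. m x \<le> m p"
    using configs_obtain_window[OF m] assms(2,3) by (metis mult_pos_pos order_less_le_trans pos2)
  have "real M * real (k * M) - real (m p) * (real (k * M) - real (m p)) \<le> real M ^ 2"
    using potential_ge_peak_bound[OF m window(1,2) supp peak] V by simp
  moreover have "real M ^ 2 = real M * real (k * M) - real M * (real (k * M) - real M)"
    by (simp add: power2_eq_square algebra_simps)
  moreover have "2 * real M \<le> real (k * M)"
    using \<open>2 \<le> k\<close> by (simp add: mult_right_mono)
  ultimately have "\<not> real (m p) < real M"
    using mult_self_diff_strict_mono[of "real (m p)" "real M" "real (k * M)"] by linarith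
  moreover have "m p \<le> M"
    using m by (simp add: configs_def)
  ultimately have "m p = M"
    by simp
  with V \<open>0 < M\<close> have "m p \<noteq> 0"
    and "potential M m = real M * real (k * M) - real (m p) * (real (k * M) - real (m p))"
    by (simp_all add: power2_eq_square algebra_simps)
  note steps = potential_eq_peak_boundD[OF m window(1,2) supp peak this]
  have "m x = M" if "L < x" "x < R" for x
    using plateau_if_unimodal_saturated[OF window(3,4) that steps] \<open>m p = M\<close> by simp
  then have "m = translate L (mconf M k (m L))"
    using plateau_eq_translate_mconf[OF \<open>2 \<le> k\<close> supp] plateau_width[OF m \<open>2 \<le> k\<close> supp window(3,4)]
    by blast
  moreover have "m L \<in> {1..M}"
    using m \<open>m L \<noteq> 0\<close> by (auto simp: configs_def)
  ultimately show ?thesis by blast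
qed

lemma minimizers_eq_level:
  assumes "m\<^sub>0 \<in> configs M N" "\<And>m. m \<in> configs M N \<Longrightarrow> potential M m\<^sub>0 \<le> potential M m"
  shows "minimizers M N = {m \<in> configs M N. potential M m = potential M m\<^sub>0}"
  using assms unfolding minimizers_def by (auto intro: order_antisym)

theorem mainTheorem6:
  fixes M k :: nat
  assumes "M \<ge> 2" and "k \<ge> 2"
  shows "minimizers M (k * M) = {translate t (mconf M k j) | t j. j \<in> {1..M}}
    \<and> (\<forall>j\<in>{1..M}. potential M (mconf M k j) = real M ^ 2)"
proof
  have "0 < M" using assms by simp
  have mconf_j: "mconf M k j \<in> configs M (k * M)" "potential M (mconf M k j) = real M ^ 2"
    if "j \<in> {1..M}" for j
    using mconf_in_configs potential_mconf that assms by simp_all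
  then show "\<forall>j\<in>{1..M}. potential M (mconf M k j) = real M ^ 2" by blast
  have "1 \<in> {1..M}" "2 * M \<le> k * M"
    using assms by simp_all
  have lower: "potential M (mconf M k 1) \<le> potential M m" if "m \<in> configs M (k * M)" for m
    using potential_ge_sq[OF that \<open>0 < M\<close> \<open>2 * M \<le> k * M\<close>] mconf_j(2)[OF \<open>1 \<in> {1..M}\<close>] by simp
  have "minimizers M (k * M) = {m \<in> configs M (k * M). potential M m = real M ^ 2}"
    using minimizers_eq_level[OF mconf_j(1)[OF \<open>1 \<in> {1..M}\<close>] lower] mconf_j(2)[OF \<open>1 \<in> {1..M}\<close>]
    by simp
  also have "\<dots> = {translate t (mconf M k j) | t j. j \<in> {1..M}}"
    using potential_eq_sq_imp_translate_mconf[OF _ \<open>0 < M\<close> assms(2)]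
      translate_in_configs mconf_j potential_translate
    by (auto; blast)
  finally show "minimizers M (k * M) = {translate t (mconf M k j) | t j. j \<in> {1..M}}" .
qed

end
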